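(* Let $f,f',g\in\mathbb{S}(\mathcal{H})$ with $f\ne-g$, $f'\ne-g$ and $d_{\mathbb{S}}(f,g)\le\frac\pi2$. Let $f_t=\Gamma(g,f,t)$ and $f'_t=\Gamma(g,f',t)$. Then $d_{\mathbb{S}}(f_t,f'_t)\le 2\,d_{\mathbb{S}}(f,f')$ for every $t\in[0,1]$.
   Context: $\mathcal{H}$ is a finite-dimensional complex Hermitian space (in the paper, the space of polynomial systems $H_{d_1}\times\dots\times H_{d_n}$ with the Weyl inner product), $\mathbb{S}(\mathcal{H})$ its unit sphere with the angular distance $d_{\mathbb{S}}(x,y)\in[0,\pi]$, $\cos d_{\mathbb{S}}(x,y)=\mathrm{Re}\langle x,y\rangle$. For $f\ne-g$ and $\alpha=d_{\mathbb{S}}(f,g)\in[0,\pi)$, $\Gamma(g,f,t)=\frac{\sin((1-t)\alpha)}{\sin\alpha}g+\frac{\sin(t\alpha)}{\sin\alpha}f$ (and $\Gamma(g,f,t)=g$ if $\alpha=0$) is the geodesic from $g$ to $f$. *)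

theory Defs
  imports "HOL-Analysis.Analysis"
begin

text \<open>Model of a finite-dimensional complex Hermitian space: C^n as complex ^ 'n,
  with Hermitian inner product linear in the first argument.\<close>

definition herm :: "complex ^ 'n \<Rightarrow> complex ^ 'n \<Rightarrow> complex" where
  "herm x y = (\<Sum>i\<in>UNIV. x $ i * cnj (y $ i))"

definition unit_sphere :: "(complex ^ 'n) set" where
  "unit_sphere = {x. Re (herm x x) = 1}"

definition dS :: "complex ^ 'n \<Rightarrow> complex ^ 'n \<Rightarrow> real" where
  "dS x y = arccos (Re (herm x y))"

definition Gamma :: "complex ^ 'n \<Rightarrow> complex ^ 'n \<Rightarrow> real \<Rightarrow> complex ^ 'n" where
  "Gamma g f t = (let \<alpha> = dS f g in
     if \<alpha> = 0 then g
     else (sin ((1 - t) * \<alpha>) / sin \<alpha>) *\<^sub>R g + (sin (t * \<alpha>) / sin \<alpha>) *\<^sub>R f)"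

end

theory Submission
  imports Defs
begin

text \<open>
  Write \<open>f = cos \<alpha> g + sin \<alpha> u\<close> and \<open>f' = cos \<beta> g + sin \<beta> v\<close> with \<open>u, v \<perp> g\<close>; then the
  geodesics are \<open>f\<^sub>t = cos (t\<alpha>) g + sin (t\<alpha>) u\<close>, and by the spherical law of cosines both
  \<open>cos d(f, f')\<close> and \<open>cos d(f\<^sub>t, f'\<^sub>t)\<close> are affine in \<open>c = \<langle>u, v\<rangle>\<close>.
  If \<open>d(f, f') \<ge> \<pi>/2\<close> the bound is trivial.  Otherwise, with \<open>r = cos d(f, f') > 0\<close>, it
  amounts to \<open>cos d(f\<^sub>t, f'\<^sub>t) \<ge> 2r\<^sup>2 - 1\<close>, whose defect is a convex quadratic in \<open>c\<close>.
  It is nonpositive at \<open>c = 1\<close> (there \<open>|\<alpha> - \<beta>| \<le> \<pi>/2\<close> and \<open>cos 2x \<le> cos tx\<close>) and at the left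
  end of the range of \<open>c\<close> where \<open>r > 0\<close>, hence everywhere in between.
\<close>

lemma abs_le_pi_half_if_cos_pos:
  fixes x :: real
  assumes "0 < cos x" and "\<bar>x\<bar> \<le> 3 * pi / 2"
  shows "\<bar>x\<bar> \<le> pi / 2"
proof (rule ccontr)
  assume far: "\<not> \<bar>x\<bar> \<le> pi / 2"
  have "cos \<bar>x\<bar> \<le> 0"
  proof (cases "\<bar>x\<bar> \<le> pi")
    case True
    then have "cos \<bar>x\<bar> \<le> cos (pi / 2)"
      using far by (intro cos_monotone_0_pi_le) auto
    then show ?thesis by simp
  next
    case False
    have "0 \<le> cos (\<bar>x\<bar> - pi)"
      using False assms(2) by (intro cos_ge_zero) auto
    then show ?thesis by simp
  qed
  with assms(1) show False by simp
qed

lemma cos_double_le_cos_mult: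
  fixes x t :: real
  assumes "0 < cos x" and "\<bar>x\<bar> \<le> 3 * pi / 2" and "0 \<le> t" and "t \<le> 1"
  shows "2 * (cos x)\<^sup>2 - 1 \<le> cos (t * x)"
proof -
  have near: "\<bar>x\<bar> \<le> pi / 2"
    using assms(1,2) by (rule abs_le_pi_half_if_cos_pos)
  have "t * \<bar>x\<bar> \<le> \<bar>x\<bar>"
    using assms(3,4) by (simp add: mult_left_le_one_le)
  then have "cos (2 * \<bar>x\<bar>) \<le> cos (t * \<bar>x\<bar>)"
    using near assms(3) by (intro cos_monotone_0_pi_le) auto
  also have "cos (t * \<bar>x\<bar>) = cos (t * x)"
    using assms(3) by (metis abs_mult abs_of_nonneg cos_abs_real)
  finally show ?thesis
    by (metis abs_mult abs_numeral cos_abs_real cos_double_cos)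
qed

lemma convex_quadratic_nonpos_between:
  fixes A B C P S x0 x x1 :: real
  assumes "0 \<le> A" and "x0 \<le> x" and "x \<le> x1"
    and "A * (P + S * x0)\<^sup>2 + B + C * x0 \<le> 0"
    and "A * (P + S * x1)\<^sup>2 + B + C * x1 \<le> 0"
  shows "A * (P + S * x)\<^sup>2 + B + C * x \<le> 0"
proof -
  define h where "h y = A * (P + S * y)\<^sup>2 + B + C * y" for y
  have "(x1 - x0) * h x = (x1 - x) * h x0 + (x - x0) * h x1 - A * S\<^sup>2 * (x - x0) * (x1 - x) * (x1 - x0)"
    unfolding h_def by (simp add: algebra_simps power2_eq_square)
  moreover have "(x1 - x) * h x0 \<le> 0" "(x - x0) * h x1 \<le> 0"
    using assms unfolding h_def by (simp_all add: mult_nonneg_nonpos)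
  moreover have "0 \<le> A * S\<^sup>2 * (x - x0) * (x1 - x) * (x1 - x0)"
    using assms by simp
  ultimately have "(x1 - x0) * h x \<le> 0"
    by linarith
  then show ?thesis
    using assms unfolding h_def
    by (cases "x0 = x1") (auto simp: mult_le_0_iff)
qed

lemma arccos_le_double_arccos:
  fixes r L :: real
  assumes "\<bar>r\<bar> \<le> 1" and "\<bar>L\<bar> \<le> 1" and "0 < r \<Longrightarrow> 2 * r\<^sup>2 - 1 \<le> L"
  shows "arccos L \<le> 2 * arccos r"
proof (cases "0 < r")
  case True
  have "0 \<le> arccos r" "arccos r \<le> pi / 2"
    using assms(1) True arccos_lbound[of r] arccos_le_pi2[of r] by auto
  moreover have "cos (2 * arccos r) = 2 * r\<^sup>2 - 1"
    using assms(1) by (simp add: cos_double_cos)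
  ultimately have "arccos L \<le> arccos (cos (2 * arccos r))"
    using assms True by (intro arccos_le_arccos) (auto simp: abs_le_iff)
  also have "\<dots> = 2 * arccos r"
    using \<open>0 \<le> arccos r\<close> \<open>arccos r \<le> pi / 2\<close> by (intro arccos_cos) auto
  finally show ?thesis .
next
  case False
  have "arccos 0 \<le> arccos r"
    using assms(1) False by (intro arccos_le_arccos) auto
  moreover have "arccos L \<le> pi"
    using assms(2) by (intro arccos_ubound) auto
  ultimately show ?thesis by simp
qed

lemma abs_cos_cos_plus_sin_sin_le_1:
  fixes a b c :: real
  assumes "\<bar>c\<bar> \<le> 1"
  shows "\<bar>cos a * cos b + sin a * sin b * c\<bar> \<le> 1"
proof -
  have "\<bar>sin a * sin b * c\<bar> \<le> \<bar>sin a * sin b\<bar>"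
    using assms by (simp add: abs_mult mult_left_le)
  moreover have "2 * \<bar>cos a * cos b\<bar> \<le> (cos a)\<^sup>2 + (cos b)\<^sup>2"
    "2 * \<bar>sin a * sin b\<bar> \<le> (sin a)\<^sup>2 + (sin b)\<^sup>2"
    using sum_squares_bound[of "\<bar>cos a\<bar>" "\<bar>cos b\<bar>"]
      sum_squares_bound[of "\<bar>sin a\<bar>" "\<bar>sin b\<bar>"]
    by (simp_all add: abs_mult)
  ultimately show ?thesis
    using sin_cos_squared_add[of a] sin_cos_squared_add[of b] by linarith
qed

lemma spherical_cos_sq_le_scaled:
  fixes a b t c :: real
  assumes "0 \<le> a" "a \<le> pi / 2" "0 \<le> b" "b \<le> pi" "0 \<le> t" "t \<le> 1" "\<bar>c\<bar> \<le> 1"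
    and "0 < cos a * cos b + sin a * sin b * c"
  shows "2 * (cos a * cos b + sin a * sin b * c)\<^sup>2 - 1
           \<le> cos (t * a) * cos (t * b) + sin (t * a) * sin (t * b) * c"
proof -
  define P S Q T where "P = cos a * cos b" and "S = sin a * sin b"
    and "Q = cos (t * a) * cos (t * b)" and "T = sin (t * a) * sin (t * b)"
  define h where "h y = 2 * (P + S * y)\<^sup>2 + (- 1 - Q) + (- T) * y" for y
  have pos: "0 < P + S * c"
    using assms(8) unfolding P_def S_def .
  have c_bounds: "- 1 \<le> c" "c \<le> 1"
    using assms(7) by auto
  have "t * a \<le> a" "t * b \<le> b"
    using assms by (simp_all add: mult_left_le_one_le)
  then have S0: "0 \<le> S" and T0: "0 \<le> T"
    unfolding S_def T_def using assms by (simp_all add: sin_ge_zero)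
  have PS: "P + S = cos (a - b)" "P - S = cos (a + b)"
    and QT: "Q + T = cos (t * (a - b))" "Q - T = cos (t * (a + b))"
    unfolding P_def S_def Q_def T_def by (simp_all add: cos_diff cos_add algebra_simps)
  have "S * c \<le> S"
    using S0 c_bounds by (simp add: mult_left_le)
  then have "0 < cos (a - b)"
    using pos PS by linarith
  then have "2 * (cos (a - b))\<^sup>2 - 1 \<le> cos (t * (a - b))"
    using assms pi_gt_zero by (intro cos_double_le_cos_mult) (auto split: abs_split)
  then have h_right: "h 1 \<le> 0"
    unfolding h_def PS(1)[symmetric] QT(1)[symmetric] by simp
  \<comment> \<open>Left end: \<open>-1\<close> if \<open>a + b\<close> is acute, otherwise the zero \<open>-P/S\<close> of \<open>P + S y\<close>.\<close>
  obtain y0 where "y0 \<le> c" "h y0 \<le> 0"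
  proof (cases "0 < cos (a + b)")
    case True
    then have "2 * (cos (a + b))\<^sup>2 - 1 \<le> cos (t * (a + b))"
      using assms by (intro cos_double_le_cos_mult) auto
    then have "h (- 1) \<le> 0"
      unfolding h_def PS(2)[symmetric] QT(2)[symmetric] by simp
    then show ?thesis
      using that[of "- 1"] c_bounds by simp
  next
    case False
    have "S \<noteq> 0"
      using False PS(2) pos by auto
    with S0 have "0 < S"
      by simp
    have "- 1 \<le> - P / S"
      using False PS(2) \<open>0 < S\<close> by (simp add: field_simps)
    then have "Q - T \<le> Q + T * (- P / S)"
      using mult_left_mono[OF _ T0] by fastforce
    moreover have "h (- P / S) = - 1 - (Q + T * (- P / S))"
      unfolding h_def using \<open>0 < S\<close> by simp
    ultimately have "h (- P / S) \<le> 0"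
      using QT(2) cos_ge_minus_one[of "t * (a + b)"] by linarith
    moreover have "- P / S \<le> c"
      using pos \<open>0 < S\<close> by (simp add: field_simps)
    ultimately show ?thesis
      using that by blast
  qed
  then have "h c \<le> 0"
    using convex_quadratic_nonpos_between[of 2 y0 c 1 P S "- 1 - Q" "- T", folded h_def]
      h_right c_bounds by simp
  then show ?thesis
    unfolding h_def P_def S_def Q_def T_def by simp
qed

lemma arccos_spherical_scaled_le:
  fixes a b t c :: real
  assumes "0 \<le> a" "a \<le> pi / 2" "0 \<le> b" "b \<le> pi" "0 \<le> t" "t \<le> 1" "\<bar>c\<bar> \<le> 1"
  shows "arccos (cos (t * a) * cos (t * b) + sin (t * a) * sin (t * b) * c)
           \<le> 2 * arccos (cos a * cos b + sin a * sin b * c)"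
  using assms
  by (intro arccos_le_double_arccos abs_cos_cos_plus_sin_sin_le_1 spherical_cos_sq_le_scaled)

lemma norm_diff_inner_scaleR_eq_sin_arccos:
  fixes f g :: "'a::real_inner"
  assumes "norm f = 1" and "norm g = 1"
  shows "norm (f - inner f g *\<^sub>R g) = sin (arccos (inner f g))"
proof -
  have "inner f f = 1" "inner g g = 1"
    using assms by (simp_all add: power2_norm_eq_inner[symmetric])
  then have "(norm (f - inner f g *\<^sub>R g))\<^sup>2 = 1 - (inner f g)\<^sup>2"
    by (simp only: power2_norm_eq_inner) (simp add: inner_diff inner_commute power2_eq_square)
  moreover have "\<bar>inner f g\<bar> \<le> 1"
    using Cauchy_Schwarz_ineq2[of f g] assms by simp
  ultimately show ?thesis
    by (simp add: sin_arccos_abs real_sqrt_unique)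
qed

lemma unit_vector_decomposition:
  fixes f g :: "'a::real_inner"
  assumes "norm f = 1" and "norm g = 1"
  obtains u where "inner u g = 0" and "norm u \<le> 1"
    and "f = cos (arccos (inner f g)) *\<^sub>R g + sin (arccos (inner f g)) *\<^sub>R u"
proof -
  define p s where "p = inner f g" and "s = sin (arccos p)"
  define u where "u = (1 / s) *\<^sub>R (f - p *\<^sub>R g)"
  have ns: "norm (f - p *\<^sub>R g) = s"
    unfolding p_def s_def using assms by (rule norm_diff_inner_scaleR_eq_sin_arccos)
  have "\<bar>p\<bar> \<le> 1"
    unfolding p_def using Cauchy_Schwarz_ineq2[of f g] assms by simp
  then have "cos (arccos p) = p"
    by (simp add: cos_arccos_abs)
  moreover have "f = p *\<^sub>R g + s *\<^sub>R u"
    using ns unfolding u_def by (cases "s = 0") auto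
  moreover have "inner u g = 0"
    using assms unfolding u_def p_def by (simp add: inner_diff_left power2_norm_eq_inner[symmetric])
  moreover have "norm u \<le> 1"
    using ns unfolding u_def by (cases "s = 0") auto
  ultimately show ?thesis
    using that unfolding p_def s_def by metis
qed

lemma slerp_eq_rotation:
  fixes g u :: "'a::real_vector"
  assumes "sin \<alpha> \<noteq> 0"
  shows "(sin ((1 - t) * \<alpha>) / sin \<alpha>) *\<^sub>R g + (sin (t * \<alpha>) / sin \<alpha>) *\<^sub>R (cos \<alpha> *\<^sub>R g + sin \<alpha> *\<^sub>R u)
           = cos (t * \<alpha>) *\<^sub>R g + sin (t * \<alpha>) *\<^sub>R u"
proof -
  have "sin ((1 - t) * \<alpha>) + sin (t * \<alpha>) * cos \<alpha> = sin \<alpha> * cos (t * \<alpha>)"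
    by (simp add: left_diff_distrib sin_diff)
  then show ?thesis
    using assms by (simp add: algebra_simps scaleR_add_left[symmetric] add_divide_distrib[symmetric])
qed

lemma inner_rotations:
  fixes g u v :: "'a::real_inner"
  assumes "norm g = 1" and "inner u g = 0" and "inner v g = 0"
  shows "inner (cos a *\<^sub>R g + sin a *\<^sub>R u) (cos b *\<^sub>R g + sin b *\<^sub>R v)
           = cos a * cos b + sin a * sin b * inner u v"
  using assms by (simp add: inner_commute power2_norm_eq_inner[symmetric] algebra_simps)

lemma Re_herm_eq_inner: "Re (herm x y) = inner x y"
  unfolding herm_def inner_vec_def inner_complex_def by (simp add: Re_sum)

lemma dS_eq_arccos_inner: "dS x y = arccos (inner x y)"
  unfolding dS_def Re_herm_eq_inner ..

lemma unit_sphere_iff_norm_eq_1: "x \<in> unit_sphere \<longleftrightarrow> norm x = 1"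
  unfolding unit_sphere_def by (simp add: Re_herm_eq_inner norm_eq_sqrt_inner)

lemma dS_bounds:
  assumes "x \<in> unit_sphere" and "y \<in> unit_sphere"
  shows "0 \<le> dS x y" and "dS x y \<le> pi"
proof -
  have "\<bar>inner x y\<bar> \<le> 1"
    using Cauchy_Schwarz_ineq2[of x y] assms by (simp add: unit_sphere_iff_norm_eq_1)
  then show "0 \<le> dS x y" "dS x y \<le> pi"
    unfolding dS_eq_arccos_inner by (auto intro: arccos_lbound arccos_ubound)
qed

lemma Gamma_eq_rotation:
  fixes f g :: "complex ^ 'n"
  assumes "f \<in> unit_sphere" and "g \<in> unit_sphere" and "f \<noteq> - g"
  obtains u where "inner u g = 0" and "norm u \<le> 1"
    and "f = cos (dS f g) *\<^sub>R g + sin (dS f g) *\<^sub>R u"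
    and "\<And>t. Gamma g f t = cos (t * dS f g) *\<^sub>R g + sin (t * dS f g) *\<^sub>R u"
proof -
  obtain u where u: "inner u g = 0" "norm u \<le> 1"
    and f_eq: "f = cos (dS f g) *\<^sub>R g + sin (dS f g) *\<^sub>R u"
    using unit_vector_decomposition assms(1,2)
    unfolding unit_sphere_iff_norm_eq_1 dS_eq_arccos_inner by blast
  have "dS f g \<noteq> pi"
    using f_eq assms(3) by auto
  then have "sin (dS f g) \<noteq> 0" if "dS f g \<noteq> 0"
    using that dS_bounds[OF assms(1,2)] sin_gt_zero[of "dS f g"] by fastforce
  then have "Gamma g f t = cos (t * dS f g) *\<^sub>R g + sin (t * dS f g) *\<^sub>R u" for t
    unfolding Gamma_def Let_def by (subst (2) f_eq) (auto simp: slerp_eq_rotation)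
  with u f_eq that show ?thesis
    by blast
qed

theorem lemma2p5:
  fixes f f' g :: "complex ^ 'n"
  assumes "f \<in> unit_sphere" and "f' \<in> unit_sphere" and "g \<in> unit_sphere"
    and "f \<noteq> - g" and "f' \<noteq> - g"
    and "dS f g \<le> pi / 2"
    and "t \<in> {0..1}"
  shows "dS (Gamma g f t) (Gamma g f' t) \<le> 2 * dS f f'"
proof -
  define a b where "a = dS f g" and "b = dS f' g"
  obtain u where u: "inner u g = 0" "norm u \<le> 1" "f = cos a *\<^sub>R g + sin a *\<^sub>R u"
    and Gamma_f: "Gamma g f t = cos (t * a) *\<^sub>R g + sin (t * a) *\<^sub>R u"
    using Gamma_eq_rotation[OF assms(1,3,4)] unfolding a_def by metis
  obtain v where v: "inner v g = 0" "norm v \<le> 1" "f' = cos b *\<^sub>R g + sin b *\<^sub>R v"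
    and Gamma_f': "Gamma g f' t = cos (t * b) *\<^sub>R g + sin (t * b) *\<^sub>R v"
    using Gamma_eq_rotation[OF assms(2,3,5)] unfolding b_def by metis
  have "norm g = 1"
    using assms(3) by (simp add: unit_sphere_iff_norm_eq_1)
  note inner_uv = inner_rotations[OF this u(1) v(1)]
  have "\<bar>inner u v\<bar> \<le> 1"
    using Cauchy_Schwarz_ineq2[of u v] mult_mono[OF u(2) v(2)] by simp
  moreover have "inner (Gamma g f t) (Gamma g f' t)
      = cos (t * a) * cos (t * b) + sin (t * a) * sin (t * b) * inner u v"
    unfolding Gamma_f Gamma_f' by (rule inner_uv)
  moreover have "inner f f' = cos a * cos b + sin a * sin b * inner u v"
    by (subst u(3), subst v(3)) (rule inner_uv)
  ultimately have "arccos (inner (Gamma g f t) (Gamma g f' t)) \<le> 2 * arccos (inner f f')"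
    using assms(6,7) dS_bounds[OF assms(1,3)] dS_bounds[OF assms(2,3)] unfolding a_def b_def
    by (simp add: arccos_spherical_scaled_le)
  then show ?thesis
    unfolding dS_eq_arccos_inner .
qed

end
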